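(* Let $\alpha>0$, $R>0$, $B>R$. In the Gaussian white noise model $dX^{(n)}(t)=f(t)dt+n^{-1/2}dW(t)$ on $[0,1]$, let $x_{lk}=\int_0^1\psi_{lk}dX^{(n)}=f_{lk}+n^{-1/2}\varepsilon_{lk}$ with $f_{lk}=\langle f,\psi_{lk}\rangle_2$ and $\varepsilon_{lk}$ i.i.d. $N(0,1)$. Suppose the true $f_0$ satisfies $\sup_{l,k}2^{l(1/2+\alpha)}|f_{0,lk}|\le R$. Let the prior $\Pi$ make the $f_{lk}$ independent with Lebesgue density $\sigma_l^{-1}\varphi(\cdot/\sigma_l)$ on $\mathbb{R}$, where $\varphi=\frac1{2B}\mathbf 1_{[-B,B]}$ and $\sigma_l=2^{-l(1/2+\alpha)}$. Let $L_n=\lfloor\log_2((n/\log n)^{1/(2\alpha+1)})\rfloor$. Then there exists $C>0$ such that for every real $t$, every $n\ge2$, every $0\le l\le L_n$ and every $0\le k\le2^l-1$, $$E_{f_0}^n\,E^\Pi\big[e^{t\sqrt n(f_{lk}-x_{lk})}\mid X^{(n)}\big]\le Ce^{t^2/2}.$$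
   Context: $\{\psi_{lk}\}$ is a (Cohen–Daubechies–Vial boundary-corrected) wavelet orthonormal basis of $L^2[0,1]$ indexed by $l\ge0$, $0\le k\le2^l-1$. $E^\Pi[\cdot\mid X^{(n)}]$ denotes expectation under the posterior distribution and $E^n_{f_0}$ expectation under the model with $f=f_0$. *)

theory Defs
  imports "HOL-Probability.Probability"
begin

definition phiB :: "real \<Rightarrow> real \<Rightarrow> real" where
  "phiB B u = (if -B \<le> u \<and> u \<le> B then 1 / (2 * B) else 0)"

definition sigma_lev :: "real \<Rightarrow> nat \<Rightarrow> real" where
  "sigma_lev \<alpha> l = 2 powr (- (real l * (1/2 + \<alpha>)))"

definition prior_dens :: "real \<Rightarrow> real \<Rightarrow> real \<Rightarrow> real" where
  "prior_dens B \<sigma> u = phiB B (u / \<sigma>) / \<sigma>"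

text \<open>Likelihood of the coefficient value u given the observation x_lk = x
  in the sequence (white noise) model with noise level n^(-1/2).\<close>
definition lik :: "nat \<Rightarrow> real \<Rightarrow> real \<Rightarrow> real" where
  "lik n x u = exp (- real n * (u - x)^2 / 2)"

text \<open>Posterior expectation of g(f_lk) given the data (Bayes formula). By
  independence of the prior coordinates and of the noise, the posterior of
  f_lk depends on the data only through x_lk = x.\<close>
definition post_exp :: "nat \<Rightarrow> real \<Rightarrow> real \<Rightarrow> (real \<Rightarrow> real) \<Rightarrow> real \<Rightarrow> real" where
  "post_exp n B \<sigma> g x =
     (LINT u|lborel. g u * lik n x u * prior_dens B \<sigma> u) /
     (LINT u|lborel. lik n x u * prior_dens B \<sigma> u)"

definition L_cut :: "real \<Rightarrow> nat \<Rightarrow> int" where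
  "L_cut \<alpha> n = \<lfloor>log 2 ((real n / ln (real n)) powr (1 / (2 * \<alpha> + 1)))\<rfloor>"

end

theory Submission
  imports Defs
begin

text \<open>The posterior moment generating function is a ratio of two integrals. Completing
  the square bounds the numerator by \<open>e^{t^2/2}\<close> times the prior's height. The
  denominator is at least the likelihood mass of a subinterval of the prior support of length
  \<open>\<delta>/\<surd>n\<close> placed as close to the observation as possible, which costs only a factor
  \<open>e^{-M^2/2}\<close>, where \<open>M - \<delta>\<close> is the standardised distance from the observation to
  the support. For \<open>l \<le> L_n\<close> one has \<open>\<surd>n \<sigma>_l \<ge> 1/2\<close>, so the true coefficient lies
  at standardised distance at least \<open>2\<delta> = (B - R)/2\<close> inside the support and only noise
  beyond \<open>2\<delta>\<close> contributes to \<open>M\<close>. Against the Gaussian density of the noise this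
  leaves a factor \<open>e^{\<delta>^2 - \<delta>|e|}\<close>, whose integral is finite and free of \<open>n\<close>,
  \<open>l\<close> and \<open>k\<close>.\<close>

lemma prior_dens_eq_indicator:
  assumes "B > 0" "\<sigma> > 0"
  shows "prior_dens B \<sigma> u = indicator {-(B*\<sigma>)..B*\<sigma>} u / (2*(B*\<sigma>))"
proof -
  have "(-B \<le> u/\<sigma> \<and> u/\<sigma> \<le> B) \<longleftrightarrow> u \<in> {-(B*\<sigma>)..B*\<sigma>}"
    using assms by (auto simp: field_simps)
  then show ?thesis
    using assms by (auto simp: prior_dens_def phiB_def indicator_def field_simps)
qed

lemma exp_mult_lik_eq_normal_density:
  assumes "n > 0"
  shows "exp (t * sqrt n * (u - x)) * lik n x u
    = exp (t\<^sup>2/2) * sqrt (2*pi) / sqrt n * normal_density (x + t / sqrt n) (1 / sqrt n) u"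
proof -
  define r where "r = sqrt (real n)"
  have r: "r > 0" "real n = r\<^sup>2" using assms by (auto simp: r_def)
  have "exp (t * r * (u - x)) * lik n x u = exp (t\<^sup>2/2) * exp (- (r * (u - x) - t)\<^sup>2 / 2)"
    unfolding lik_def exp_add[symmetric] r(2) by (simp add: power2_eq_square field_simps)
  also have "\<dots> = exp (t\<^sup>2/2) * sqrt (2*pi) / r * normal_density (x + t / r) (1 / r) u"
  proof -
    have "sqrt (2*pi*(1/r)\<^sup>2) = sqrt (2*pi) / r"
      using r(1) by (simp add: real_sqrt_divide power_divide)
    moreover have "(u - (x + t/r))\<^sup>2 / (2*(1/r)\<^sup>2) = (r * (u - x) - t)\<^sup>2 / 2"
      using r(1) by (simp add: power2_eq_square field_simps)
    ultimately show ?thesis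
      using r(1) by (simp add: normal_density_def field_simps)
  qed
  finally show ?thesis by (simp add: r_def)
qed

lemma integral_exp_mult_lik_prior_le:
  assumes n: "n > 0" and B: "B > 0" and \<sigma>: "\<sigma> > 0"
  shows "(LINT u|lborel. exp (t * sqrt n * (u - x)) * lik n x u * prior_dens B \<sigma> u)
    \<le> exp (t\<^sup>2/2) * sqrt (2*pi) / (2 * (B*\<sigma>) * sqrt n)"
proof -
  define c where "c = exp (t\<^sup>2/2) * sqrt (2*pi) / (2 * (B*\<sigma>) * sqrt n)"
  have r: "sqrt (real n) > 0" using n by simp
  have "(LINT u|lborel. exp (t * sqrt n * (u - x)) * lik n x u * prior_dens B \<sigma> u)
      \<le> (LINT u|lborel. c * normal_density (x + t / sqrt n) (1 / sqrt n) u)"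
  proof (rule integral_mono')
    fix u
    have "prior_dens B \<sigma> u \<le> 1 / (2 * (B*\<sigma>))"
      using B \<sigma> by (simp add: prior_dens_eq_indicator indicator_def)
    then have "exp (t * sqrt n * (u - x)) * lik n x u * prior_dens B \<sigma> u
        \<le> exp (t\<^sup>2/2) * sqrt (2*pi) / sqrt n * normal_density (x + t / sqrt n) (1 / sqrt n) u
          * (1 / (2 * (B*\<sigma>)))"
      unfolding exp_mult_lik_eq_normal_density[OF n] by (rule mult_left_mono) simp
    then show "exp (t * sqrt n * (u - x)) * lik n x u * prior_dens B \<sigma> u
        \<le> c * normal_density (x + t / sqrt n) (1 / sqrt n) u"
      by (simp add: c_def mult_ac)
  qed (use r B \<sigma> in \<open>auto simp: c_def\<close>)
  also have "\<dots> = c" using r by simp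
  finally show ?thesis unfolding c_def .
qed

lemma exists_subinterval_near:
  fixes W l x :: real
  assumes "0 < l" "l \<le> 2 * W"
  obtains p where "-W \<le> p" "p + l \<le> W"
    "\<And>u. u \<in> {p..p + l} \<Longrightarrow> \<bar>u - x\<bar> \<le> max (\<bar>x\<bar> - W) 0 + l"
proof
  define p where "p = max (-W) (min (W - l) (x - l/2))"
  show "-W \<le> p" "p + l \<le> W" "\<And>u. u \<in> {p..p + l} \<Longrightarrow> \<bar>u - x\<bar> \<le> max (\<bar>x\<bar> - W) 0 + l"
    using assms by (auto simp: p_def max_def min_def abs_if split: if_splits)
qed

lemma integral_lik_prior_ge:
  assumes n: "n > 0" and B: "B > 0" and \<sigma>: "\<sigma> > 0"
    and \<delta>: "0 < \<delta>" "\<delta> \<le> 2 * sqrt n * (B*\<sigma>)"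
  shows "exp (- (max (sqrt n * \<bar>x\<bar> - sqrt n * (B*\<sigma>)) 0 + \<delta>)\<^sup>2 / 2) * \<delta> / (2 * (B*\<sigma>) * sqrt n)
    \<le> (LINT u|lborel. lik n x u * prior_dens B \<sigma> u)"
proof -
  define r where "r = sqrt (real n)"
  define W where "W = B * \<sigma>"
  define M where "M = max (r * \<bar>x\<bar> - r * W) 0 + \<delta>"
  have r: "r > 0" using n by (simp add: r_def)
  have W: "W > 0" using B \<sigma> by (simp add: W_def)
  have l: "0 < \<delta> / r" "\<delta> / r \<le> 2 * W"
    using \<delta> r by (auto simp: r_def W_def field_simps)
  obtain p where p: "-W \<le> p" "p + \<delta> / r \<le> W"
    and near: "\<And>u. u \<in> {p..p + \<delta> / r} \<Longrightarrow> \<bar>u - x\<bar> \<le> max (\<bar>x\<bar> - W) 0 + \<delta> / r"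
    using exists_subinterval_near[OF l, of x] by blast
  have prior: "\<And>u. prior_dens B \<sigma> u = indicator {-W..W} u / (2 * W)"
    unfolding W_def by (rule prior_dens_eq_indicator[OF B \<sigma>])
  have "(LINT u|lborel. exp (- M\<^sup>2 / 2) / (2 * W) * indicator {p..p + \<delta> / r} u)
      \<le> (LINT u|lborel. lik n x u * prior_dens B \<sigma> u)"
  proof (rule integral_mono)
    show "integrable lborel (\<lambda>u. lik n x u * prior_dens B \<sigma> u)"
    proof -
      have "integrable lborel (\<lambda>u. lik n x u / (2 * W) * indicator {-W..W} u)"
        using W by (intro borel_integrable_atLeastAtMost) (auto simp: lik_def intro!: continuous_intros)
      then show ?thesis by (simp add: prior mult.commute)
    qed
    fix u
    show "exp (- M\<^sup>2 / 2) / (2 * W) * indicator {p..p + \<delta> / r} u \<le> lik n x u * prior_dens B \<sigma> u"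
    proof (cases "u \<in> {p..p + \<delta> / r}")
      case True
      have "M = r * (max (\<bar>x\<bar> - W) 0 + \<delta> / r)"
        using r by (simp add: M_def max_def field_simps)
      then have "r * \<bar>u - x\<bar> \<le> M"
        using mult_left_mono[OF near[OF True], of r] r by simp
      then have "real n * (u - x)\<^sup>2 \<le> M\<^sup>2"
        using power_mono[of "r * \<bar>u - x\<bar>" M 2] r n by (simp add: r_def power_mult_distrib)
      then show ?thesis
        using True p W by (simp add: prior lik_def divide_right_mono)
    qed (use W in \<open>simp add: prior lik_def\<close>)
  qed (rule borel_integrable_atLeastAtMost, simp)
  then show ?thesis
    using l(1) by (simp add: M_def r_def W_def mult_ac)
qed

lemma post_exp_exp_le:
  assumes n: "n > 0" and B: "B > 0" and \<sigma>: "\<sigma> > 0"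
    and \<delta>: "0 < \<delta>" "\<delta> \<le> 2 * sqrt n * (B*\<sigma>)"
  shows "post_exp n B \<sigma> (\<lambda>u. exp (t * sqrt n * (u - x))) x
    \<le> exp (t\<^sup>2/2) * sqrt (2*pi) / \<delta> * exp ((max (sqrt n * \<bar>x\<bar> - sqrt n * (B*\<sigma>)) 0 + \<delta>)\<^sup>2 / 2)"
proof -
  define M where "M = max (sqrt n * \<bar>x\<bar> - sqrt n * (B*\<sigma>)) 0 + \<delta>"
  define d where "d = 2 * (B*\<sigma>) * sqrt n"
  have d: "d > 0" using n B \<sigma> by (simp add: d_def)
  have "post_exp n B \<sigma> (\<lambda>u. exp (t * sqrt n * (u - x))) x
      \<le> (exp (t\<^sup>2/2) * sqrt (2*pi) / d) / (exp (- M\<^sup>2 / 2) * \<delta> / d)"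
    unfolding post_exp_def M_def d_def
  proof (rule frac_le)
    show "0 < exp (- (max (sqrt n * \<bar>x\<bar> - sqrt n * (B*\<sigma>)) 0 + \<delta>)\<^sup>2 / 2) * \<delta> / (2 * (B*\<sigma>) * sqrt n)"
      using \<delta> d by (simp add: d_def)
  qed (use integral_exp_mult_lik_prior_le[OF n B \<sigma>] integral_lik_prior_ge[OF n B \<sigma> \<delta>] B \<sigma> in auto)
  also have "\<dots> = exp (t\<^sup>2/2) * sqrt (2*pi) / \<delta> * exp (M\<^sup>2 / 2)"
    using d \<delta> by (simp add: exp_minus field_simps)
  finally show ?thesis unfolding M_def .
qed

lemma sqrt_mult_sigma_lev_ge_half:
  assumes \<alpha>: "\<alpha> > 0" and n: "n \<ge> 2" and l: "int l \<le> L_cut \<alpha> n"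
  shows "sqrt n * sigma_lev \<alpha> l \<ge> 1/2"
proof -
  have n2: "real n \<ge> 2" using n by simp
  have ln_n: "ln (real n) \<ge> 1/2"
  proof -
    have "ln (2::real) \<ge> 1/2"
      using ln_le_minus_one[of "1/2::real"] by (simp add: ln_div)
    moreover have "ln (2::real) \<le> ln (real n)" using n2 by simp
    ultimately show ?thesis by linarith
  qed
  define q where "q = real n / ln (real n)"
  have q: "q > 0" using n2 ln_n by (simp add: q_def)
  have "real l \<le> log 2 (q powr (1 / (2*\<alpha> + 1)))"
    using l unfolding L_cut_def q_def by linarith
  then have "2 powr real l \<le> q powr (1 / (2*\<alpha> + 1))"
    using q by (simp add: le_log_iff)
  then have "(2 powr real l) powr (2*\<alpha> + 1) \<le> (q powr (1 / (2*\<alpha> + 1))) powr (2*\<alpha> + 1)"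
    using \<alpha> by (intro powr_mono2) auto
  then have resolution: "2 powr (real l * (2*\<alpha> + 1)) \<le> q"
    using \<alpha> q by (simp add: powr_powr)
  have "(sigma_lev \<alpha> l)\<^sup>2 = 2 powr (- (real l * (2*\<alpha> + 1)))"
    unfolding sigma_lev_def power2_eq_square powr_add[symmetric]
    by (rule arg_cong[where f = "(powr) 2"]) (simp add: algebra_simps)
  then have sigma_sq: "(sigma_lev \<alpha> l)\<^sup>2 = 1 / 2 powr (real l * (2*\<alpha> + 1))"
    by (simp add: powr_minus_divide)
  have "ln (real n) = real n / q" using ln_n n2 by (simp add: q_def)
  also have "\<dots> \<le> real n * (sigma_lev \<alpha> l)\<^sup>2"
    unfolding sigma_sq using resolution q n2 by (simp add: divide_left_mono)
  also have "\<dots> = (sqrt n * sigma_lev \<alpha> l)\<^sup>2"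
    by (simp add: power_mult_distrib)
  finally have "(1/2)\<^sup>2 \<le> (sqrt n * sigma_lev \<alpha> l)\<^sup>2"
    using ln_n by (simp add: power2_eq_square)
  then show ?thesis
    by (rule power2_le_imp_le) (simp add: sigma_lev_def)
qed

lemma sq_max_plus_le:
  fixes a b \<delta> :: real
  assumes "0 \<le> \<delta>" "a \<le> b - 2 * \<delta>"
  shows "(max a 0 + \<delta>)\<^sup>2 \<le> (b - \<delta>)\<^sup>2 + \<delta>\<^sup>2"
proof (cases "a \<le> 0")
  case False
  then have "(a + \<delta>)\<^sup>2 \<le> (b - \<delta>)\<^sup>2"
    using assms by (intro power_mono) auto
  moreover have "max a 0 = a" using False by simp
  ultimately show ?thesis by (simp add: add_increasing2)
qed (simp add: max_def)

lemma shifted_excess_le: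
  fixes r \<sigma> \<delta> B R f e :: real
  assumes r: "r > 0" and level: "r * \<sigma> \<ge> 1/2" and \<delta>: "0 \<le> \<delta>" "4 * \<delta> \<le> B - R"
    and f: "\<bar>f\<bar> \<le> R * \<sigma>"
  shows "r * \<bar>f + e / r\<bar> - r * (B*\<sigma>) \<le> \<bar>e\<bar> - 2 * \<delta>"
proof -
  have "r * \<bar>f + e / r\<bar> = \<bar>r * f + e\<bar>"
    using r by (simp add: abs_mult[symmetric] field_simps)
  also have "\<dots> \<le> r * (R * \<sigma>) + \<bar>e\<bar>"
    using abs_triangle_ineq[of "r * f" e] mult_left_mono[OF f less_imp_le[OF r]]
    by (simp only: abs_mult abs_of_pos[OF r])
  finally have x_bound: "r * \<bar>f + e / r\<bar> \<le> r * (R * \<sigma>) + \<bar>e\<bar>" .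
  have "2 * \<delta> \<le> (B - R) / 2"
    using \<delta> by simp
  also have "\<dots> \<le> r * \<sigma> * (B - R)"
    using mult_right_mono[OF level, of "B - R"] \<delta> by simp
  finally show ?thesis
    using x_bound by (simp add: algebra_simps)
qed

lemma std_normal_density_mult_post_exp_le:
  assumes n: "n > 0" and \<sigma>: "\<sigma> > 0" and \<delta>: "\<delta> > 0" "4 * \<delta> \<le> B - R"
    and level: "sqrt n * \<sigma> \<ge> 1/2" and f: "\<bar>f\<bar> \<le> R * \<sigma>"
  shows "std_normal_density e *
      post_exp n B \<sigma> (\<lambda>u. exp (t * sqrt n * (u - (f + e / sqrt n)))) (f + e / sqrt n)
    \<le> exp (t\<^sup>2/2) * exp (\<delta>\<^sup>2) / \<delta> * exp (- \<delta> * \<bar>e\<bar>)"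
proof -
  define r where "r = sqrt (real n)"
  define x where "x = f + e / r"
  define M where "M = max (r * \<bar>x\<bar> - r * (B*\<sigma>)) 0 + \<delta>"
  have r: "r > 0" using n by (simp add: r_def)
  have R: "R \<ge> 0" using f \<sigma> by (meson abs_ge_zero order_trans zero_le_mult_iff not_le)
  have B: "B > 0" using \<delta> R by linarith
  have "B \<le> B * (2 * r * \<sigma>)"
    using mult_left_mono[of 1 "2 * r * \<sigma>" B] level B by (simp add: r_def)
  moreover have "B * (2 * r * \<sigma>) = 2 * r * (B*\<sigma>)" by (simp add: mult_ac)
  ultimately have "\<delta> \<le> 2 * r * (B*\<sigma>)"
    using \<delta> R by linarith
  then have post: "post_exp n B \<sigma> (\<lambda>u. exp (t * r * (u - x))) x
      \<le> exp (t\<^sup>2/2) * sqrt (2*pi) / \<delta> * exp (M\<^sup>2 / 2)"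
    unfolding M_def r_def using post_exp_exp_le[OF n B \<sigma> \<delta>(1)] by simp
  have "r * \<bar>x\<bar> - r * (B*\<sigma>) \<le> \<bar>e\<bar> - 2 * \<delta>"
    unfolding x_def using r level \<delta> f by (intro shifted_excess_le) (auto simp: r_def)
  then have "M\<^sup>2 \<le> (\<bar>e\<bar> - \<delta>)\<^sup>2 + \<delta>\<^sup>2"
    unfolding M_def using \<delta> by (intro sq_max_plus_le) auto
  then have "std_normal_density e * post_exp n B \<sigma> (\<lambda>u. exp (t * r * (u - x))) x
      \<le> std_normal_density e * (exp (t\<^sup>2/2) * sqrt (2*pi) / \<delta> * exp (((\<bar>e\<bar> - \<delta>)\<^sup>2 + \<delta>\<^sup>2) / 2))"
    using post \<delta> by (intro mult_left_mono order_trans[OF post]) auto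
  also have "\<dots> = exp (t\<^sup>2/2) / \<delta> * (exp (- e\<^sup>2 / 2) * exp (((\<bar>e\<bar> - \<delta>)\<^sup>2 + \<delta>\<^sup>2) / 2))"
    by (simp add: std_normal_density_def)
  also have "exp (- e\<^sup>2 / 2) * exp (((\<bar>e\<bar> - \<delta>)\<^sup>2 + \<delta>\<^sup>2) / 2) = exp (\<delta>\<^sup>2) * exp (- \<delta> * \<bar>e\<bar>)"
    unfolding exp_add[symmetric]
    by (rule arg_cong[where f = exp]) (simp add: power2_eq_square field_simps)
  finally show ?thesis by (simp add: x_def r_def)
qed

lemma nn_integral_exp_neg_abs_le:
  fixes c :: real
  assumes c: "c > 0"
  shows "(\<integral>\<^sup>+x. ennreal (exp (- c * \<bar>x\<bar>)) \<partial>lborel) \<le> ennreal (2 / c)"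
proof -
  have density_one: "(\<integral>\<^sup>+x. ennreal (exponential_density c x) \<partial>lborel) = 1"
  proof -
    interpret prob_space "density lborel (exponential_density c)"
      using prob_space_exponential_density[OF c] .
    show ?thesis using emeasure_space_1 by (simp add: emeasure_density)
  qed
  have reflected_one: "(\<integral>\<^sup>+x. ennreal (exponential_density c (- x)) \<partial>lborel) = 1"
    using nn_integral_real_affine[of "\<lambda>x. ennreal (exponential_density c x)" "-1" 0] density_one
    by simp
  have "(\<integral>\<^sup>+x. ennreal (exp (- c * \<bar>x\<bar>)) \<partial>lborel)
      \<le> (\<integral>\<^sup>+x. ennreal (1 / c) *
            (ennreal (exponential_density c x) + ennreal (exponential_density c (- x))) \<partial>lborel)"
  proof (rule nn_integral_mono)
    fix x :: real
    have "exp (- c * \<bar>x\<bar>) \<le> 1 / c * (exponential_density c x + exponential_density c (- x))"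
      using c by (cases "x < 0") (auto simp: exponential_density_def field_simps)
    then show "ennreal (exp (- c * \<bar>x\<bar>))
        \<le> ennreal (1 / c) * (ennreal (exponential_density c x) + ennreal (exponential_density c (- x)))"
      using c by (simp add: ennreal_mult[symmetric] ennreal_plus[symmetric] exponential_density_nonneg
          ennreal_leI del: ennreal_plus)
  qed
  also have "\<dots> = ennreal (1 / c) * 2"
    by (simp add: nn_integral_cmult nn_integral_add density_one reflected_one)
  also have "\<dots> = ennreal (2 / c)"
    using c by (simp add: ennreal_mult[symmetric] ennreal_numeral[symmetric] del: ennreal_numeral)
  finally show ?thesis .
qed

lemma integral_le_of_le_exp_neg_abs:
  fixes g :: "real \<Rightarrow> real"
  assumes c: "c > 0" and K: "K \<ge> 0" and g: "\<And>x. g x \<le> K * exp (- c * \<bar>x\<bar>)"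
  shows "integral\<^sup>L lborel g \<le> 2 * K / c"
proof (rule integral_real_bounded)
  have "(\<integral>\<^sup>+x. ennreal (g x) \<partial>lborel) \<le> (\<integral>\<^sup>+x. ennreal K * ennreal (exp (- c * \<bar>x\<bar>)) \<partial>lborel)"
    using g K by (intro nn_integral_mono) (simp add: ennreal_mult[symmetric] ennreal_leI)
  also have "\<dots> = ennreal K * (\<integral>\<^sup>+x. ennreal (exp (- c * \<bar>x\<bar>)) \<partial>lborel)"
    by (rule nn_integral_cmult) simp
  also have "\<dots> \<le> ennreal K * ennreal (2 / c)"
    by (rule mult_left_mono[OF nn_integral_exp_neg_abs_le[OF c]]) simp
  also have "\<dots> = ennreal (2 * K / c)"
    using K c by (simp add: ennreal_mult[symmetric])
  finally show "(\<integral>\<^sup>+x. ennreal (g x) \<partial>lborel) \<le> ennreal (2 * K / c)" .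
qed (use K c in simp)

theorem lemma1:
  fixes \<alpha> R B :: real and f0 :: "nat \<Rightarrow> nat \<Rightarrow> real"
  assumes "\<alpha> > 0" and "R > 0" and "B > R"
    and "\<And>l k. k < 2 ^ l \<Longrightarrow> 2 powr (real l * (1/2 + \<alpha>)) * \<bar>f0 l k\<bar> \<le> R"
  shows "\<exists>C > 0. \<forall>(t::real) (n::nat) (l::nat) (k::nat).
           n \<ge> 2 \<longrightarrow> int l \<le> L_cut \<alpha> n \<longrightarrow> k \<le> 2 ^ l - 1 \<longrightarrow>
           (LINT e|lborel. std_normal_density e *
              post_exp n B (sigma_lev \<alpha> l)
                (\<lambda>u. exp (t * sqrt (real n) * (u - (f0 l k + e / sqrt (real n)))))
                (f0 l k + e / sqrt (real n)))
           \<le> C * exp (t^2 / 2)"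
proof -
  define \<delta> where "\<delta> = (B - R) / 4"
  have \<delta>: "\<delta> > 0" "4 * \<delta> \<le> B - R" using assms(3) by (auto simp: \<delta>_def)
  define C where "C = 2 * exp (\<delta>\<^sup>2) / \<delta>\<^sup>2"
  show ?thesis
  proof (intro exI[of _ C] conjI allI impI)
    show "C > 0" using \<delta> by (simp add: C_def)
    fix t :: real and n l k :: nat
    assume n: "n \<ge> 2" and l: "int l \<le> L_cut \<alpha> n" and k: "k \<le> 2 ^ l - 1"
    have "k < 2 ^ l" using k by (simp add: le_diff_conv2 Suc_le_eq)
    then have "\<bar>f0 l k\<bar> \<le> R * sigma_lev \<alpha> l"
      using assms(4)[of k l] by (simp add: sigma_lev_def powr_minus_divide pos_le_divide_eq mult.commute)
    then have "std_normal_density e *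
        post_exp n B (sigma_lev \<alpha> l)
          (\<lambda>u. exp (t * sqrt (real n) * (u - (f0 l k + e / sqrt (real n))))) (f0 l k + e / sqrt (real n))
      \<le> exp (t\<^sup>2/2) * exp (\<delta>\<^sup>2) / \<delta> * exp (- \<delta> * \<bar>e\<bar>)" for e
      using n \<delta> sqrt_mult_sigma_lev_ge_half[OF assms(1) n l]
      by (intro std_normal_density_mult_post_exp_le) (auto simp: sigma_lev_def)
    then have "(LINT e|lborel. std_normal_density e *
        post_exp n B (sigma_lev \<alpha> l)
          (\<lambda>u. exp (t * sqrt (real n) * (u - (f0 l k + e / sqrt (real n))))) (f0 l k + e / sqrt (real n)))
      \<le> 2 * (exp (t\<^sup>2/2) * exp (\<delta>\<^sup>2) / \<delta>) / \<delta>"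
      using \<delta> by (intro integral_le_of_le_exp_neg_abs) auto
    also have "\<dots> = C * exp (t^2 / 2)"
      by (simp add: C_def power2_eq_square)
    finally show "(LINT e|lborel. std_normal_density e *
        post_exp n B (sigma_lev \<alpha> l)
          (\<lambda>u. exp (t * sqrt (real n) * (u - (f0 l k + e / sqrt (real n))))) (f0 l k + e / sqrt (real n)))
      \<le> C * exp (t^2 / 2)" .
  qed
qed

end
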